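(* The conditional logics $\mathsf{CKCEM}$ and $\mathsf{CKCEMID}$ do not have the uniform Lyndon interpolation property.
   Context: Formulas of $\mathcal{L}_\triangleright$: atoms, $\bot$, $\wedge,\vee,\to$, binary $\triangleright$; $\top:=\bot\to\bot$, $\neg A:=A\to\bot$. $\mathsf{CE}$ is the smallest set containing all instances of classical tautologies and closed under modus ponens and the rule: from $\phi_0\leftrightarrow\phi_1$ and $\psi_0\leftrightarrow\psi_1$ infer $(\phi_0\triangleright\psi_0)\to(\phi_1\triangleright\psi_1)$. $\mathsf{CKCEM}$ is $\mathsf{CE}$ plus all instances of (CM) $(\phi\triangleright\psi\wedge\theta)\to(\phi\triangleright\psi)\wedge(\phi\triangleright\theta)$, (CC) $(\phi\triangleright\psi)\wedge(\phi\triangleright\theta)\to(\phi\triangleright\psi\wedge\theta)$, (CN) $\phi\triangleright\top$, (CEM) $(\phi\triangleright\psi)\vee(\phi\triangleright\neg\psi)$; $\mathsf{CKCEMID}=\mathsf{CKCEM}+$(ID) $\phi\triangleright\phi$. Positive/negative variables: $V^+(p)=\{p\}$, $V^-(p)=\varnothing$; $V^\pm(\bot)=V^\pm(\top)=\varnothing$; $V^\pm(\phi\odot\psi)=V^\pm(\phi)\cup V^\pm(\psi)$ for $\odot\in\{\wedge,\vee\}$; $V^+(\phi\to\psi)=V^-(\phi)\cup V^+(\psi)$, $V^-(\phi\to\psi)=V^+(\phi)\cup V^-(\psi)$; $V^+(\phi\triangleright\psi)=V^-(\phi)\cup V^+(\psi)$, $V^-(\phi\triangleright\psi)=V^+(\phi)\cup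 V^-(\psi)$. $p^\circ$-free: $p\notin V^\circ(\cdot)$. ULIP for a logic $L$: for every formula $\phi$, atom $p$, $\circ\in\{+,-\}$ there are $p^\circ$-free formulas $\forall^\circ p\,\phi$, $\exists^\circ p\,\phi$ with $V^\dagger(\cdot)\subseteq V^\dagger(\phi)$ for both $\dagger\in\{+,-\}$, such that $L\vdash\forall^\circ p\,\phi\to\phi$; for every $p^\circ$-free $\psi$, $L\vdash\psi\to\phi$ implies $L\vdash\psi\to\forall^\circ p\,\phi$; $L\vdash\phi\to\exists^\circ p\,\phi$; for every $p^\circ$-free $\psi$, $L\vdash\phi\to\psi$ implies $L\vdash\exists^\circ p\,\phi\to\psi$. *)

theory Defs
  imports Main
begin

datatype fm = Atom nat | Bot | And fm fm | Or fm fm | Imp fm fm | Cond fm fm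

definition Top :: fm where "Top = Imp Bot Bot"
definition Neg :: "fm \<Rightarrow> fm" where "Neg A = Imp A Bot"
definition Iff :: "fm \<Rightarrow> fm \<Rightarrow> fm" where "Iff A B = And (Imp A B) (Imp B A)"

fun ceval :: "(fm \<Rightarrow> bool) \<Rightarrow> fm \<Rightarrow> bool" where
  "ceval I (Atom p) = I (Atom p)"
| "ceval I Bot = False"
| "ceval I (And a b) = (ceval I a \<and> ceval I b)"
| "ceval I (Or a b) = (ceval I a \<or> ceval I b)"
| "ceval I (Imp a b) = (ceval I a \<longrightarrow> ceval I b)"
| "ceval I (Cond a b) = I (Cond a b)"

definition taut_inst :: "fm \<Rightarrow> bool" where
  "taut_inst A = (\<forall>I. ceval I A)"

text \<open>Smallest set containing the tautology instances and the extra axioms Ax,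
  closed under modus ponens and RCEA/RCEC rule of CE.\<close>
inductive derivable :: "fm set \<Rightarrow> fm \<Rightarrow> bool" for Ax :: "fm set" where
  taut: "taut_inst A \<Longrightarrow> derivable Ax A"
| ax: "A \<in> Ax \<Longrightarrow> derivable Ax A"
| mp: "derivable Ax (Imp A B) \<Longrightarrow> derivable Ax A \<Longrightarrow> derivable Ax B"
| ce: "derivable Ax (Iff a0 a1) \<Longrightarrow> derivable Ax (Iff b0 b1) \<Longrightarrow>
       derivable Ax (Imp (Cond a0 b0) (Cond a1 b1))"

definition CKCEM_ax :: "fm set" where
  "CKCEM_ax =
     {Imp (Cond a (And b c)) (And (Cond a b) (Cond a c)) | a b c. True}
   \<union> {Imp (And (Cond a b) (Cond a c)) (Cond a (And b c)) | a b c. True}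
   \<union> {Cond a Top | a. True}
   \<union> {Or (Cond a b) (Cond a (Neg b)) | a b. True}"

definition CKCEMID_ax :: "fm set" where
  "CKCEMID_ax = CKCEM_ax \<union> {Cond a a | a. True}"

definition CKCEM :: "fm \<Rightarrow> bool" where "CKCEM = derivable CKCEM_ax"
definition CKCEMID :: "fm \<Rightarrow> bool" where "CKCEMID = derivable CKCEMID_ax"

text \<open>Positive (True) and negative (False) variables.\<close>
fun V :: "bool \<Rightarrow> fm \<Rightarrow> nat set" where
  "V pos (Atom p) = (if pos then {p} else {})"
| "V pos Bot = {}"
| "V pos (And a b) = V pos a \<union> V pos b"
| "V pos (Or a b) = V pos a \<union> V pos b"
| "V pos (Imp a b) = V (\<not> pos) a \<union> V pos b"
| "V pos (Cond a b) = V (\<not> pos) a \<union> V pos b"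

text \<open>Uniform Lyndon interpolation property; the polarity o ranges over {+,-} = {True, False}.\<close>
definition ULIP :: "(fm \<Rightarrow> bool) \<Rightarrow> bool" where
  "ULIP L = (\<forall>\<phi> p (pol::bool). \<exists>A E.
      p \<notin> V pol A \<and> V True A \<subseteq> V True \<phi> \<and> V False A \<subseteq> V False \<phi> \<and>
      p \<notin> V pol E \<and> V True E \<subseteq> V True \<phi> \<and> V False E \<subseteq> V False \<phi> \<and>
      L (Imp A \<phi>) \<and>
      (\<forall>\<psi>. p \<notin> V pol \<psi> \<longrightarrow> L (Imp \<psi> \<phi>) \<longrightarrow> L (Imp \<psi> A)) \<and>
      L (Imp \<phi> E) \<and>
      (\<forall>\<psi>. p \<notin> V pol \<psi> \<longrightarrow> L (Imp \<phi> \<psi>) \<longrightarrow> L (Imp E \<psi>)))"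

end

theory Submission
  imports Defs
begin

text \<open>
  Take \<open>\<phi> = p\<^sub>0 \<triangleright> p\<^sub>1\<close> and \<open>\<psi> = \<not>(p\<^sub>0 \<triangleright> \<not>p\<^sub>1)\<close>. By (CEM) \<open>\<psi> \<rightarrow> \<phi>\<close> is provable, and \<open>\<psi>\<close> is
  \<open>p\<^sub>0\<^sup>-\<close>-free, so a uniform interpolant \<open>\<forall>\<^sup>-p\<^sub>0 \<phi>\<close> would satisfy \<open>\<psi> \<rightarrow> \<forall>\<^sup>-p\<^sub>0 \<phi>\<close>. But \<open>\<forall>\<^sup>-p\<^sub>0 \<phi>\<close>
  must have no negative \<open>p\<^sub>0\<close> and no positive variables outside those of \<open>\<phi>\<close>, so \<open>p\<^sub>0\<close> does
  not occur in it at all. In a two-world model whose selection function returns a set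
  if it is a singleton and \<open>\<emptyset>\<close> otherwise (sound for CKCEMID), \<open>\<psi>\<close> holds at a world where
  \<open>p\<^sub>0\<close> and \<open>p\<^sub>1\<close> hold; moving \<open>p\<^sub>0\<close> to the other world keeps the interpolant true but
  falsifies \<open>\<phi>\<close>, contradicting \<open>\<forall>\<^sup>-p\<^sub>0 \<phi> \<rightarrow> \<phi>\<close>.
\<close>

fun holds :: "(nat \<Rightarrow> 'w set) \<Rightarrow> ('w \<Rightarrow> 'w set \<Rightarrow> 'w set) \<Rightarrow> fm \<Rightarrow> 'w \<Rightarrow> bool" where
  "holds Va f (Atom p) w = (w \<in> Va p)"
| "holds Va f Bot w = False"
| "holds Va f (And a b) w = (holds Va f a w \<and> holds Va f b w)"
| "holds Va f (Or a b) w = (holds Va f a w \<or> holds Va f b w)"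
| "holds Va f (Imp a b) w = (holds Va f a w \<longrightarrow> holds Va f b w)"
| "holds Va f (Cond a b) w = (f w {u. holds Va f a u} \<subseteq> {u. holds Va f b u})"

lemma Collect_holds_Atom [simp]: "Collect (holds Va f (Atom p)) = Va p"
  by auto

definition valid :: "('w \<Rightarrow> 'w set \<Rightarrow> 'w set) \<Rightarrow> fm \<Rightarrow> bool" where
  "valid f A = (\<forall>Va w. holds Va f A w)"

lemma ceval_holds: "ceval (\<lambda>B. holds Va f B w) A = holds Va f A w"
  by (induction A) auto

lemma derivable_sound:
  assumes "derivable Ax A" and "\<And>B. B \<in> Ax \<Longrightarrow> valid f B"
  shows "valid f A"
  using assms(1)
proof (induction rule: derivable.induct)
  case (taut A)
  then show ?case by (metis ceval_holds taut_inst_def valid_def)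
next
  case (ax A)
  then show ?case by (rule assms(2))
next
  case (mp A B)
  then show ?case by (simp add: valid_def)
next
  case (ce a0 a1 b0 b1)
  then have "{u. holds Va f a0 u} = {u. holds Va f a1 u}"
    and "{u. holds Va f b0 u} = {u. holds Va f b1 u}" for Va
    by (auto simp: valid_def Iff_def)
  then show ?case by (simp add: valid_def)
qed

lemma CKCEMID_ax_valid:
  assumes reflexive: "\<And>w X. f w X \<subseteq> X"
    and subsingleton: "\<And>w X x y. x \<in> f w X \<Longrightarrow> y \<in> f w X \<Longrightarrow> x = y"
    and "B \<in> CKCEMID_ax"
  shows "valid f B"
proof -
  have cem: "holds Va f (Or (Cond a b) (Cond a (Neg b))) w" for Va a b w
  proof (cases "f w {u. holds Va f a u} = {}")
    case False
    then obtain x where "f w {u. holds Va f a u} = {x}"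
      using subsingleton by blast
    then show ?thesis by (auto simp: Neg_def)
  qed simp
  from \<open>B \<in> CKCEMID_ax\<close> consider
      (CM) a b c where "B = Imp (Cond a (And b c)) (And (Cond a b) (Cond a c))"
    | (CC) a b c where "B = Imp (And (Cond a b) (Cond a c)) (Cond a (And b c))"
    | (CN) a where "B = Cond a Top"
    | (CEM) a b where "B = Or (Cond a b) (Cond a (Neg b))"
    | (ID) a where "B = Cond a a"
    unfolding CKCEMID_ax_def CKCEM_ax_def by blast
  then show ?thesis
    by cases (use cem reflexive in \<open>auto simp: valid_def Top_def\<close>)
qed

lemma derivable_mono: "derivable Ax A \<Longrightarrow> Ax \<subseteq> Ax' \<Longrightarrow> derivable Ax' A"
  by (induction rule: derivable.induct) (auto intro: derivable.intros)

lemma holds_cong_valuation: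
  assumes "\<And>q. q \<in> V True A \<union> V False A \<Longrightarrow> Va q = Va' q"
  shows "holds Va f A w = holds Va' f A w"
  using assms
proof (induction A arbitrary: w)
  case (Cond a b)
  then have "{u. holds Va f a u} = {u. holds Va' f a u}"
    and "{u. holds Va f b u} = {u. holds Va' f b u}"
    by auto
  then show ?case by simp
qed auto

definition singleton_sel :: "'w set \<Rightarrow> 'w set" where
  "singleton_sel X = (if is_singleton X then X else {})"

lemma derivable_CKCEMID_valid_singleton_sel:
  "derivable CKCEMID_ax A \<Longrightarrow> valid (\<lambda>w. singleton_sel) A"
  by (erule derivable_sound, rule CKCEMID_ax_valid)
    (auto simp: singleton_sel_def is_singleton_def split: if_splits)

lemma derivable_CEM_consequence:
  assumes "CKCEM_ax \<subseteq> Ax"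
  shows "derivable Ax (Imp (Neg (Cond a (Neg b))) (Cond a b))"
proof -
  have "derivable Ax (Or (Cond a b) (Cond a (Neg b)))"
    using assms by (intro derivable.ax) (auto simp: CKCEM_ax_def)
  moreover have "derivable Ax (Imp (Or (Cond a b) (Cond a (Neg b)))
      (Imp (Neg (Cond a (Neg b))) (Cond a b)))"
    by (rule derivable.taut) (auto simp: taut_inst_def Neg_def)
  ultimately show ?thesis by (blast intro: derivable.mp)
qed

lemma ULIP_forall_interpolant:
  assumes "ULIP L"
  obtains A where "p \<notin> V pol A" "V True A \<subseteq> V True \<phi>" "L (Imp A \<phi>)"
    "\<And>\<psi>. p \<notin> V pol \<psi> \<Longrightarrow> L (Imp \<psi> \<phi>) \<Longrightarrow> L (Imp \<psi> A)"
  using assms unfolding ULIP_def by meson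

lemma not_ULIP_if_CEM_and_sound_singleton_sel:
  assumes sound: "\<And>A. L A \<Longrightarrow> valid (\<lambda>w. singleton_sel :: bool set \<Rightarrow> bool set) A"
    and cem: "L (Imp (Neg (Cond (Atom 0) (Neg (Atom 1)))) (Cond (Atom 0) (Atom 1)))"
  shows "\<not> ULIP L"
proof
  let ?f = "\<lambda>w. singleton_sel :: bool set \<Rightarrow> bool set"
  let ?\<phi> = "Cond (Atom 0) (Atom 1)"
  let ?\<psi> = "Neg (Cond (Atom 0) (Neg (Atom 1)))"
  define Va :: "nat \<Rightarrow> bool set" where "Va = (\<lambda>q. {True})"
  define Va' :: "nat \<Rightarrow> bool set" where "Va' = Va(0 := {False})"
  assume "ULIP L"
  then obtain A where A_free: "0 \<notin> V False A" and A_pos: "V True A \<subseteq> V True ?\<phi>"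
    and A_\<phi>: "L (Imp A ?\<phi>)"
    and A_universal: "\<And>\<psi>. 0 \<notin> V False \<psi> \<Longrightarrow> L (Imp \<psi> ?\<phi>) \<Longrightarrow> L (Imp \<psi> A)"
    using ULIP_forall_interpolant[where p = 0 and pol = False and \<phi> = ?\<phi>] by blast
  have "L (Imp ?\<psi> A)"
    using A_universal cem by (simp add: Neg_def)
  then have "holds Va ?f (Imp ?\<psi> A) True"
    using sound unfolding valid_def by blast
  moreover have "holds Va ?f ?\<psi> True"
    by (simp add: Va_def Neg_def singleton_sel_def)
  ultimately have "holds Va ?f A True"
    by simp
  moreover have "holds Va' ?f A True = holds Va ?f A True"
    using A_free A_pos by (intro holds_cong_valuation) (auto simp: Va'_def)
  ultimately have "holds Va' ?f A True"
    by simp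
  then have "holds Va' ?f ?\<phi> True"
    using sound[OF A_\<phi>] unfolding valid_def by (meson holds.simps(5))
  then show False
    by (simp add: Va'_def Va_def singleton_sel_def)
qed

theorem mainTheorem14:
  shows "\<not> ULIP CKCEM \<and> \<not> ULIP CKCEMID"
proof
  have CKCEM_sub: "CKCEM_ax \<subseteq> CKCEMID_ax"
    by (simp add: CKCEMID_ax_def)
  show "\<not> ULIP CKCEM"
    unfolding CKCEM_def
    by (rule not_ULIP_if_CEM_and_sound_singleton_sel)
      (blast intro: derivable_CKCEMID_valid_singleton_sel derivable_mono[OF _ CKCEM_sub],
       rule derivable_CEM_consequence[OF subset_refl])
  show "\<not> ULIP CKCEMID"
    unfolding CKCEMID_def
    by (rule not_ULIP_if_CEM_and_sound_singleton_sel)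
      (erule derivable_CKCEMID_valid_singleton_sel, rule derivable_CEM_consequence[OF CKCEM_sub])
qed

end
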